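(* Let $\mathbf{w}$ be a Sturmian word over $\{0,1\}$ and $k \in \mathbb{N}$. (1) Let $\mathbf{u} = \varphi_b^k(\mathbf{w})$. Then $0^k$ is a bispecial prefix of $\mathbf{u}$ and $\mathbf{d}_{\mathbf{u}}(0^k) = \mathbf{w}$ (up to a permutation of letters). (2) If $1\mathbf{w}$ is a Sturmian word, then $\varphi_a^k(1\mathbf{w}) = 1\varphi_b^k(\mathbf{w})$.
   Context: The morphisms on $\{0,1\}^*$ are $\varphi_a: 0 \mapsto 0, 1 \mapsto 10$ and $\varphi_b: 0 \mapsto 0, 1 \mapsto 01$, extended to infinite words letterwise. A Sturmian word is an infinite binary word having exactly $n+1$ factors of length $n$ for every $n$. A factor $v$ of $\mathbf{u}$ is right (left) special if $va, vb$ (resp. $av, bv$) are factors for two distinct letters $a \ne b$; bispecial if both. Derived word: for a uniformly recurrent word $\mathbf{u}$ and a factor $v$, a return word of $v$ is a factor $r$ such that $rv$ is a factor of $\mathbf{u}$ in which $v$ occurs exactly twice, as a prefix and as a suffix. If $r_0, \dots, r_k$ are all the return words of $v$, write $\mathbf{u} = p\, r_{s_0} r_{s_1} r_{s_2}\cdots$ where $|p|$ is the first occurrence of $v$ in $\mathbf{u}$; then $\mathbf{d}_{\mathbf{u}}(v) = s_0 s_1 s_2 \cdots$. Derived words are considered up to a permutation of letters; the derived word to the empty word is $\mathbf{u}$ itself. *)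

theory Defs
  imports Main "HOL-Library.Infinite_Set"
begin

definition fac :: "(nat \<Rightarrow> 'a) \<Rightarrow> nat \<Rightarrow> nat \<Rightarrow> 'a list" where
  "fac u i n = map u [i..<i+n]"

definition is_factor :: "'a list \<Rightarrow> (nat \<Rightarrow> 'a) \<Rightarrow> bool" where
  "is_factor v u \<longleftrightarrow> (\<exists>i. fac u i (length v) = v)"

definition sturmian :: "(nat \<Rightarrow> nat) \<Rightarrow> bool" where
  "sturmian u \<longleftrightarrow> range u \<subseteq> {0, 1} \<and>
     (\<forall>n. card {v. is_factor v u \<and> length v = n} = n + 1)"

fun phi_a :: "nat \<Rightarrow> nat list" where
  "phi_a 0 = [0]"
| "phi_a (Suc 0) = [1, 0]"
| "phi_a n = [n]"

fun phi_b :: "nat \<Rightarrow> nat list" where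
  "phi_b 0 = [0]"
| "phi_b (Suc 0) = [0, 1]"
| "phi_b n = [n]"

text \<open>Letterwise extension of a non-erasing morphism to infinite words:
  position p of the image is read off the concatenation of the images of the
  first p+1 letters (which has length at least p+1).\<close>
definition morph_inf :: "(nat \<Rightarrow> nat list) \<Rightarrow> (nat \<Rightarrow> nat) \<Rightarrow> (nat \<Rightarrow> nat)" where
  "morph_inf f w = (\<lambda>p. concat (map (f \<circ> w) [0..<Suc p]) ! p)"

definition right_special :: "nat list \<Rightarrow> (nat \<Rightarrow> nat) \<Rightarrow> bool" where
  "right_special v u \<longleftrightarrow> (\<exists>a b. a \<noteq> b \<and> is_factor (v @ [a]) u \<and> is_factor (v @ [b]) u)"

definition left_special :: "nat list \<Rightarrow> (nat \<Rightarrow> nat) \<Rightarrow> bool" where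
  "left_special v u \<longleftrightarrow> (\<exists>a b. a \<noteq> b \<and> is_factor (a # v) u \<and> is_factor (b # v) u)"

definition bispecial :: "nat list \<Rightarrow> (nat \<Rightarrow> nat) \<Rightarrow> bool" where
  "bispecial v u \<longleftrightarrow> right_special v u \<and> left_special v u"

definition occurrences :: "nat list \<Rightarrow> nat list \<Rightarrow> nat set" where
  "occurrences v x = {i. i + length v \<le> length x \<and> take (length v) (drop i x) = v}"

definition return_word :: "(nat \<Rightarrow> nat) \<Rightarrow> nat list \<Rightarrow> nat list \<Rightarrow> bool" where
  "return_word u v r \<longleftrightarrow> is_factor (r @ v) u \<and> occurrences v (r @ v) = {0, length r}
     \<and> card (occurrences v (r @ v)) = 2"

definition occ :: "(nat \<Rightarrow> nat) \<Rightarrow> nat list \<Rightarrow> nat \<Rightarrow> nat" where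
  "occ u v j = enumerate {i. fac u i (length v) = v} j"

text \<open>Derived word of u to v, written over the alphabet of return words:
  u = p r_{s_0} r_{s_1} ..., the j-th letter is the return word r_{s_j}.\<close>
definition derived :: "(nat \<Rightarrow> nat) \<Rightarrow> nat list \<Rightarrow> (nat \<Rightarrow> nat list)" where
  "derived u v = (\<lambda>j. fac u (occ u v j) (occ u v (Suc j) - occ u v j))"

definition equal_upto_perm :: "(nat \<Rightarrow> 'a) \<Rightarrow> (nat \<Rightarrow> 'b) \<Rightarrow> bool" where
  "equal_upto_perm x y \<longleftrightarrow> (\<exists>\<pi>. inj_on \<pi> (range x) \<and> (\<forall>n. y n = \<pi> (x n)))"

end

theory Submission
  imports Defs "HOL-Library.Omega_Words_Fun"
begin

(* On binary words the iterates are the morphisms phi_a^k: 0 -> 0, 1 -> 1 0^k and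
   phi_b^k: 0 -> 0, 1 -> 0^k 1, and 0^k phi_a^k(a) = phi_b^k(a) 0^k for both letters a, so
   phi_b^k(x) = 0^k phi_a^k(x) for every binary infinite word x.  Part (2) follows at once:
   phi_a^k(1w) = 1 0^k phi_a^k(w) = 1 phi_b^k(w).  For part (1), u = phi_b^k(w) is the
   concatenation of the blocks phi_b^k(w j); by the conjugacy every block is followed by 0^k,
   and 0^k cannot start strictly inside a block 0^k 1 without covering its 1.  So the
   occurrences of 0^k are exactly the block starts, the return words are the two blocks, and
   the derived word is w with 0^k 1 renamed to 1.  Both letters occur in a Sturmian word,
   which yields the factors 0^(k+1), 0^k 1 and 1 0^k. *)

abbreviation morph_list :: "('a \<Rightarrow> 'b list) \<Rightarrow> 'a list \<Rightarrow> 'b list" where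
  "morph_list f xs \<equiv> concat (map f xs)"

lemma length_morph_list_ge:
  assumes "[] \<notin> range f"
  shows "length xs \<le> length (morph_list f xs)"
proof (induction xs)
  case (Cons a xs)
  have "f a \<noteq> []" using assms by (metis rangeI)
  then show ?case using Cons.IH by (cases "f a") auto
qed simp

lemma morph_list_prefix_add:
  "morph_list f (prefix (m + n) w) = morph_list f (prefix m w) @ morph_list f (prefix n (suffix m w))"
  by (simp add: subsequence_append subsequence_prefix_suffix)

lemma morph_inf_nth:
  assumes ne: "[] \<notin> range f" and p: "p < length (morph_list f (prefix n w))"
  shows "morph_inf f w p = morph_list f (prefix n w) ! p"
proof -
  have p': "p < length (morph_list f (prefix (Suc p) w))"
    using length_morph_list_ge[OF ne, where xs="prefix (Suc p) w"] by simp
  have "morph_list f (prefix (Suc p) w) ! p = morph_list f (prefix n w) ! p"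
  proof (cases "Suc p \<le> n")
    case True
    then obtain d where "n = Suc p + d" using le_Suc_ex by blast
    then show ?thesis using p' by (simp only: morph_list_prefix_add nth_append_left)
  next
    case False
    then obtain d where "Suc p = n + d" using le_Suc_ex[of n "Suc p"] by auto
    then show ?thesis using p by (simp only: morph_list_prefix_add nth_append_left)
  qed
  then show ?thesis by (simp add: morph_inf_def subsequence_def)
qed

lemma morph_inf_conc:
  assumes ne: "[] \<notin> range f"
  shows "morph_inf f w = morph_list f (prefix n w) \<frown> morph_inf f (suffix n w)"
proof
  fix p
  let ?B = "morph_list f (prefix n w)"
  show "morph_inf f w p = (?B \<frown> morph_inf f (suffix n w)) p"
  proof (cases "p < length ?B")
    case True
    then show ?thesis by (simp add: morph_inf_nth[OF ne])
  next
    case False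
    define q where "q = p - length ?B"
    let ?C = "morph_list f (prefix (Suc q) (suffix n w))"
    have q: "q < length ?C"
      using length_morph_list_ge[OF ne, where xs="prefix (Suc q) (suffix n w)"] by simp
    have "morph_list f (prefix (n + Suc q) w) = ?B @ ?C" by (rule morph_list_prefix_add)
    then have "morph_inf f w p = ?C ! q"
      using False q morph_inf_nth[OF ne, where p=p and n="n + Suc q" and w=w]
      by (simp add: q_def nth_append)
    also have "\<dots> = morph_inf f (suffix n w) q" using morph_inf_nth[OF ne q] ..
    finally show ?thesis using False by (simp add: q_def)
  qed
qed

lemma suffix_morph_inf:
  assumes "[] \<notin> range f"
  shows "suffix (length (morph_list f (prefix n w))) (morph_inf f w) = morph_inf f (suffix n w)"
  by (subst morph_inf_conc[OF assms, where n=n]) (rule suffix_conc_length)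

lemma morph_inf_build:
  assumes "[] \<notin> range f"
  shows "morph_inf f (a ## w) = f a \<frown> morph_inf f w"
proof -
  have "suffix 1 (a ## w) = w" by (simp add: suffix_def)
  then show ?thesis
    using morph_inf_conc[OF assms, where w="a ## w" and n=1] by (simp add: subsequence_def)
qed

lemma prefix_morph_inf:
  assumes "[] \<notin> range f"
  shows "prefix (length (morph_list f (prefix n w))) (morph_inf f w) = morph_list f (prefix n w)"
  by (subst morph_inf_conc[OF assms, where n=n]) (rule prefix_conc_length)

lemma morph_list_comp: "morph_list f (morph_list g xs) = morph_list (\<lambda>a. morph_list f (g a)) xs"
  by (induction xs) auto

lemma morph_inf_comp:
  assumes nf: "[] \<notin> range f" and ng: "[] \<notin> range g"
  shows "morph_inf f (morph_inf g w) = morph_inf (\<lambda>a. morph_list f (g a)) w"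
proof
  fix p
  have nfg: "[] \<notin> range (\<lambda>a. morph_list f (g a))"
  proof
    assume "[] \<in> range (\<lambda>a. morph_list f (g a))"
    then obtain a where "morph_list f (g a) = []" by auto
    moreover obtain b bs where "g a = b # bs" using ng by (metis list.exhaust rangeI)
    ultimately show False using nf by (metis concat.simps(2) Nil_is_append_conv list.simps(9) rangeI)
  qed
  let ?G = "morph_list g (prefix (Suc p) w)"
  have G: "prefix (length ?G) (morph_inf g w) = ?G" by (rule prefix_morph_inf[OF ng])
  have p: "p < length (morph_list f ?G)"
    using length_morph_list_ge[OF nfg, where xs="prefix (Suc p) w"] by (simp add: morph_list_comp)
  have "morph_inf f (morph_inf g w) p = morph_list f ?G ! p"
    using morph_inf_nth[OF nf, where n="length ?G"] p by (simp only: G)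
  also have "\<dots> = morph_inf (\<lambda>a. morph_list f (g a)) w p"
    using morph_inf_nth[OF nfg, where n="Suc p"] p by (simp only: morph_list_comp)
  finally show "morph_inf f (morph_inf g w) p = morph_inf (\<lambda>a. morph_list f (g a)) w p" .
qed

lemma morph_inf_singleton: "morph_inf (\<lambda>a. [a]) w = w"
  by (rule ext) (simp add: morph_inf_def map_concat o_def nth_append)

lemma funpow_morph_list_neq_Nil:
  fixes f :: "'a \<Rightarrow> 'a list"
  assumes "[] \<notin> range f" and "xs \<noteq> []"
  shows "(morph_list f ^^ k) xs \<noteq> []"
proof (induction k)
  case (Suc k)
  have "length ((morph_list f ^^ k) xs) \<le> length (morph_list f ((morph_list f ^^ k) xs))"
    by (rule length_morph_list_ge[OF assms(1)])
  with Suc.IH show ?case by (metis funpow.simps(2) o_apply le_zero_eq length_0_conv)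
qed (simp add: assms(2))

lemma funpow_morph_inf:
  assumes ne: "[] \<notin> range f"
  shows "(morph_inf f ^^ k) w = morph_inf (\<lambda>a. (morph_list f ^^ k) [a]) w"
proof (induction k)
  case 0
  show ?case by (simp add: morph_inf_singleton)
next
  case (Suc k)
  have ne_k: "[] \<notin> range (\<lambda>a. (morph_list f ^^ k) [a])"
  proof
    assume "[] \<in> range (\<lambda>a. (morph_list f ^^ k) [a])"
    then obtain a where "[] = (morph_list f ^^ k) [a]" by auto
    moreover have "(morph_list f ^^ k) [a] \<noteq> []" by (rule funpow_morph_list_neq_Nil[OF ne]) simp
    ultimately show False by simp
  qed
  have "(morph_inf f ^^ Suc k) w = morph_inf f (morph_inf (\<lambda>a. (morph_list f ^^ k) [a]) w)"
    using Suc.IH by simp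
  also have "\<dots> = morph_inf (\<lambda>a. morph_list f ((morph_list f ^^ k) [a])) w"
    by (rule morph_inf_comp[OF ne ne_k])
  finally show ?case by simp
qed

lemma morph_list_conjugate:
  assumes "\<forall>a\<in>set xs. x @ f a = g a @ x"
  shows "morph_list g xs @ x = x @ morph_list f xs"
  using assms
proof (induction xs)
  case (Cons a xs)
  then have "morph_list g (a # xs) @ x = (g a @ x) @ morph_list f xs" by simp
  also have "\<dots> = x @ morph_list f (a # xs)" using Cons.prems by simp
  finally show ?case .
qed simp

lemma morph_inf_conjugate:
  assumes nf: "[] \<notin> range f" and ng: "[] \<notin> range g"
    and conj: "\<forall>a\<in>range w. x @ f a = g a @ x"
  shows "morph_inf g w = x \<frown> morph_inf f w"
proof
  fix p
  let ?G = "morph_list g (prefix (Suc p) w)"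
  let ?F = "morph_list f (prefix (Suc p) w)"
  have p: "p < length ?G" using length_morph_list_ge[OF ng, where xs="prefix (Suc p) w"] by simp
  have "x \<frown> morph_inf f w = (x @ ?F) \<frown> morph_inf f (suffix (Suc p) w)"
    by (subst morph_inf_conc[OF nf, where n="Suc p"]) simp
  also have "x @ ?F = ?G @ x"
    using conj by (intro morph_list_conjugate[symmetric]) (auto simp: subsequence_def)
  finally have eq: "x \<frown> morph_inf f w = (?G @ x) \<frown> morph_inf f (suffix (Suc p) w)" .
  have "(x \<frown> morph_inf f w) p = (?G @ x) ! p" unfolding eq by (rule conc_fst) (use p in simp)
  also have "\<dots> = ?G ! p" using p by (rule nth_append_left)
  also have "\<dots> = morph_inf g w p" using morph_inf_nth[OF ng p] ..
  finally show "morph_inf g w p = (x \<frown> morph_inf f w) p" ..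
qed

definition phi_a_pow :: "nat \<Rightarrow> nat \<Rightarrow> nat list" where
  "phi_a_pow k a = (if a = 1 then 1 # replicate k 0 else [a])"

definition phi_b_pow :: "nat \<Rightarrow> nat \<Rightarrow> nat list" where
  "phi_b_pow k a = (if a = 1 then replicate k 0 @ [1] else [a])"

lemma phi_a_neq_one: "a \<noteq> 1 \<Longrightarrow> phi_a a = [a]"
  by (cases a rule: phi_a.cases) auto

lemma phi_b_neq_one: "a \<noteq> 1 \<Longrightarrow> phi_b a = [a]"
  by (cases a rule: phi_b.cases) auto

lemma Nil_notin_range_phi_a: "[] \<notin> range phi_a"
  by (auto simp: image_iff elim!: phi_a.elims[OF sym])

lemma Nil_notin_range_phi_b: "[] \<notin> range phi_b"
  by (auto simp: image_iff elim!: phi_b.elims[OF sym])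

lemma funpow_morph_list_phi_a: "(morph_list phi_a ^^ k) [a] = phi_a_pow k a"
proof (induction k)
  case (Suc k)
  have "morph_list phi_a (replicate k 0) = replicate k 0" by (induction k) auto
  then show ?case using Suc.IH by (simp add: phi_a_pow_def phi_a_neq_one)
qed (simp add: phi_a_pow_def)

lemma funpow_morph_list_phi_b: "(morph_list phi_b ^^ k) [a] = phi_b_pow k a"
proof (induction k)
  case (Suc k)
  have "morph_list phi_b (replicate k 0) = replicate k 0" by (induction k) auto
  then show ?case using Suc.IH by (simp add: phi_b_pow_def phi_b_neq_one replicate_append_same)
qed (simp add: phi_b_pow_def)

lemma funpow_phi_a: "(morph_inf phi_a ^^ k) w = morph_inf (phi_a_pow k) w"
  by (simp add: funpow_morph_inf[OF Nil_notin_range_phi_a] funpow_morph_list_phi_a)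

lemma funpow_phi_b: "(morph_inf phi_b ^^ k) w = morph_inf (phi_b_pow k) w"
  by (simp add: funpow_morph_inf[OF Nil_notin_range_phi_b] funpow_morph_list_phi_b)

lemma Nil_notin_range_phi_a_pow: "[] \<notin> range (phi_a_pow k)"
  by (auto simp: phi_a_pow_def)

lemma Nil_notin_range_phi_b_pow: "[] \<notin> range (phi_b_pow k)"
  by (auto simp: phi_b_pow_def)

lemma phi_b_pow_eq_conc_phi_a_pow:
  assumes "range w \<subseteq> {0, 1}"
  shows "morph_inf (phi_b_pow k) w = replicate k 0 \<frown> morph_inf (phi_a_pow k) w"
proof (rule morph_inf_conjugate[OF Nil_notin_range_phi_a_pow Nil_notin_range_phi_b_pow])
  show "\<forall>a\<in>range w. replicate k 0 @ phi_a_pow k a = phi_b_pow k a @ replicate k 0"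
  proof
    fix a assume "a \<in> range w"
    then consider "a = 0" | "a = 1" using assms by auto
    then show "replicate k 0 @ phi_a_pow k a = phi_b_pow k a @ replicate k 0"
      by cases (simp_all add: phi_a_pow_def phi_b_pow_def replicate_append_same)
  qed
qed

lemma case_nat_eq_build: "case_nat a w = a ## w"
proof
  fix n show "case_nat a w n = (a ## w) n" by (cases n) simp_all
qed

lemma funpow_phi_a_build_one:
  assumes "range w \<subseteq> {0, 1}"
  shows "(morph_inf phi_a ^^ k) (1 ## w) = 1 ## (morph_inf phi_b ^^ k) w"
proof -
  have "(morph_inf phi_a ^^ k) (1 ## w) = (1 # replicate k 0) \<frown> morph_inf (phi_a_pow k) w"
    by (simp add: funpow_phi_a morph_inf_build[OF Nil_notin_range_phi_a_pow] phi_a_pow_def)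
  also have "\<dots> = 1 ## (replicate k 0 \<frown> morph_inf (phi_a_pow k) w)"
    by (rule build_cons)
  also have "\<dots> = 1 ## (morph_inf phi_b ^^ k) w"
    by (simp add: funpow_phi_b phi_b_pow_eq_conc_phi_a_pow[OF assms])
  finally show ?thesis .
qed

definition block_start :: "(nat \<Rightarrow> nat list) \<Rightarrow> (nat \<Rightarrow> nat) \<Rightarrow> nat \<Rightarrow> nat" where
  "block_start f w j = length (morph_list f (prefix j w))"

lemma block_start_0: "block_start f w 0 = 0"
  by (simp add: block_start_def)

lemma block_start_Suc: "block_start f w (Suc j) = block_start f w j + length (f (w j))"
  by (simp add: block_start_def)

lemma idx_sequence_block_start:
  assumes "[] \<notin> range f"
  shows "idx_sequence (block_start f w)"
proof -
  have "f (w j) \<noteq> []" for j using assms by (metis rangeI)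
  then show ?thesis by (simp add: idx_sequence_def block_start_0 block_start_Suc)
qed

lemma suffix_block_start:
  assumes ne: "[] \<notin> range f"
  shows "suffix (block_start f w j) (morph_inf f w) = f (w j) \<frown> morph_inf f (suffix (Suc j) w)"
proof -
  have "suffix (block_start f w j) (morph_inf f w) = morph_inf f (suffix j w)"
    unfolding block_start_def by (rule suffix_morph_inf[OF ne])
  also have "\<dots> = morph_inf f (w j ## suffix (Suc j) w)"
    by simp
  finally show ?thesis by (simp only: morph_inf_build[OF ne])
qed

lemma fac_eq_prefix_suffix: "fac u i n = prefix n (suffix i u)"
  using subsequence_prefix_suffix[where i=i and j="i + n" and w=u] by (simp add: fac_def subsequence_def)

lemma is_factorI:
  assumes "suffix i u = (xs @ v) \<frown> z"
  shows "is_factor v u"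
proof -
  have "fac u (i + length xs) (length v) = prefix (length v) (suffix (length xs) (suffix i u))"
    by (simp add: fac_eq_prefix_suffix)
  also have "\<dots> = v" using assms by simp
  finally show ?thesis unfolding is_factor_def by blast
qed

lemma enumerate_range_strict_mono:
  fixes P :: "nat \<Rightarrow> nat"
  assumes "strict_mono P"
  shows "enumerate (range P) n = P n"
proof (induction n)
  case 0
  show ?case
    by (simp add: enumerate_0) (rule Least_equality, auto simp: strict_mono_less_eq[OF assms])
next
  case (Suc n)
  have inf: "infinite (range P)"
    using strict_mono_imp_inj_on[OF assms] by (simp add: range_inj_infinite)
  show ?case
    unfolding enumerate_Suc''[OF inf] Suc.IH
    by (rule Least_equality)
      (auto simp: strict_mono_less[OF assms] intro: strict_mono_less_eq[OF assms, THEN iffD2])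
qed

lemma derived_morph_inf:
  assumes ne: "[] \<notin> range f"
    and occ: "{i. fac (morph_inf f w) i (length v) = v} = range (block_start f w)"
  shows "derived (morph_inf f w) v j = f (w j)"
proof -
  have "strict_mono (block_start f w)"
    using idx_sequence_block_start[OF ne] by (simp add: idx_sequence_def strict_mono_Suc_iff)
  then have "occ (morph_inf f w) v = block_start f w"
    by (simp add: occ_def occ enumerate_range_strict_mono fun_eq_iff)
  then show ?thesis
    by (simp add: derived_def block_start_Suc fac_eq_prefix_suffix suffix_block_start[OF ne])
qed

lemma equal_upto_perm_comp:
  assumes "inj_on f (range w)"
  shows "equal_upto_perm (f \<circ> w) w"
  unfolding equal_upto_perm_def
proof (intro exI conjI allI)
  show "inj_on (inv_into (range w) f) (range (f \<circ> w))"
    by (rule inj_on_inv_into) auto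
  show "w n = inv_into (range w) f ((f \<circ> w) n)" for n
    using assms by simp
qed

lemma range_suffix_subset: "range (suffix k x) \<subseteq> range x"
  by (auto simp: suffix_def)

lemma suffix_block_start_phi_b_pow:
  assumes "range w \<subseteq> {0, 1}"
  shows "suffix (block_start (phi_b_pow k) w j) (morph_inf (phi_b_pow k) w)
    = phi_b_pow k (w j) \<frown> replicate k 0 \<frown> morph_inf (phi_a_pow k) (suffix (Suc j) w)"
proof -
  have "range (suffix (Suc j) w) \<subseteq> {0, 1}" using range_suffix_subset assms by (rule order_trans)
  then show ?thesis
    by (simp add: suffix_block_start[OF Nil_notin_range_phi_b_pow] phi_b_pow_eq_conc_phi_a_pow)
qed

lemma occurrences_zeros_phi_b_pow:
  fixes w :: "nat \<Rightarrow> nat" and k :: nat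
  assumes bin: "range w \<subseteq> {0, 1}"
  defines "u \<equiv> morph_inf (phi_b_pow k) w" and "P \<equiv> block_start (phi_b_pow k) w"
  shows "{i. fac u i k = replicate k 0} = range P"
proof (intro equalityI subsetI)
  fix i assume "i \<in> range P"
  then obtain j where i: "i = P j" by blast
  have "range (suffix j w) \<subseteq> {0, 1}" using range_suffix_subset bin by (rule order_trans)
  then have "suffix i u = replicate k 0 \<frown> morph_inf (phi_a_pow k) (suffix j w)"
    unfolding i u_def P_def block_start_def
    by (simp add: suffix_morph_inf[OF Nil_notin_range_phi_b_pow] phi_b_pow_eq_conc_phi_a_pow)
  then have "fac u i k
      = prefix (length (replicate k 0)) (replicate k 0 \<frown> morph_inf (phi_a_pow k) (suffix j w))"
    by (simp only: fac_eq_prefix_suffix length_replicate)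
  then show "i \<in> {i. fac u i k = replicate k 0}"
    using prefix_conc_length[of "replicate k 0" "morph_inf (phi_a_pow k) (suffix j w)"] by simp
next
  fix i assume "i \<in> {i. fac u i k = replicate k 0}"
  then have zeros: "u (i + t) = 0" if "t < k" for t
    using that by (auto simp: fac_def dest: arg_cong[where f="\<lambda>xs. xs ! t"])
  have "idx_sequence P"
    unfolding P_def by (rule idx_sequence_block_start[OF Nil_notin_range_phi_b_pow])
  then obtain j where j: "P j \<le> i" "i < P (Suc j)"
    using idx_sequence_interval[of P i] by auto
  show "i \<in> range P"
  proof (rule ccontr)
    assume "i \<notin> range P"
    \<comment> \<open>then i lies strictly inside a block 0^k 1, and the occurrence at i covers its 1\<close>
    with j have "P j < i" "i < P j + length (phi_b_pow k (w j))"
      by (auto simp: P_def block_start_Suc dest: le_neq_trans)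
    then have wj: "phi_b_pow k (w j) = replicate k 0 @ [1]" and "i \<le> P j + k"
      by (auto simp: phi_b_pow_def split: if_splits)
    have "u (P j + k) = 1"
      using fun_cong[OF suffix_block_start_phi_b_pow[OF bin, of k j], of k]
      by (simp add: wj u_def P_def)
    moreover have "u (P j + k) = 0"
      using zeros[of "P j + k - i"] \<open>P j < i\<close> \<open>i \<le> P j + k\<close> by simp
    ultimately show False by simp
  qed
qed

lemma bispecial_zeros_phi_b_pow:
  assumes "range w = {0, 1}"
  shows "bispecial (replicate k 0) (morph_inf (phi_b_pow k) w)"
proof -
  let ?u = "morph_inf (phi_b_pow k) w"
  let ?z = "\<lambda>j. morph_inf (phi_a_pow k) (suffix (Suc j) w)"
  have s: "suffix (block_start (phi_b_pow k) w j) ?u = (phi_b_pow k (w j) @ replicate k 0) \<frown> ?z j"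
    for j
    using suffix_block_start_phi_b_pow[of w k j] assms by simp
  obtain j0 j1 where "w j0 = 0" "w j1 = 1" using assms by (metis insertI1 insertI2 rangeE singletonI)
  then have "suffix (block_start (phi_b_pow k) w j0) ?u = ([] @ (replicate k 0 @ [0])) \<frown> ?z j0"
    and "suffix (block_start (phi_b_pow k) w j1) ?u
      = ([] @ (replicate k 0 @ [1])) \<frown> (replicate k 0 \<frown> ?z j1)"
    and "suffix (block_start (phi_b_pow k) w j1) ?u
      = (replicate k 0 @ (1 # replicate k 0)) \<frown> ?z j1"
    using s[of j0] s[of j1] by (simp_all add: phi_b_pow_def replicate_append_same)
  then have "is_factor (replicate k 0 @ [0]) ?u" "is_factor (replicate k 0 @ [1]) ?u"
    "is_factor (1 # replicate k 0) ?u"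
    by (blast intro: is_factorI)+
  moreover have "is_factor (0 # replicate k 0) ?u"
    using \<open>is_factor (replicate k 0 @ [0]) ?u\<close> by (simp add: replicate_append_same)
  ultimately show ?thesis
    unfolding bispecial_def right_special_def left_special_def by (metis zero_neq_one)
qed

lemma sturmian_range:
  assumes "sturmian w"
  shows "range w = {0, 1}"
proof (rule card_subset_eq)
  show "range w \<subseteq> {0, 1}" using assms by (simp add: sturmian_def)
  have "{v. is_factor v w \<and> length v = 1} = (\<lambda>a. [a]) ` range w"
    by (auto simp: is_factor_def fac_def length_Suc_conv)
  moreover have "card {v. is_factor v w \<and> length v = 1} = 2"
    using assms by (simp add: sturmian_def)
  ultimately show "card (range w) = card {0 :: nat, 1}"
    by (simp add: card_image inj_on_def)
qed simp

theorem corollary16: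
  fixes w :: "nat \<Rightarrow> nat" and k :: nat
  assumes "sturmian w"
  shows "(let u = (morph_inf phi_b ^^ k) w in
            fac u 0 k = replicate k 0 \<and> bispecial (replicate k 0) u
            \<and> equal_upto_perm (derived u (replicate k 0)) w)
         \<and> (sturmian (case_nat 1 w) \<longrightarrow>
            (morph_inf phi_a ^^ k) (case_nat 1 w) = case_nat 1 ((morph_inf phi_b ^^ k) w))"
proof -
  have range_w: "range w = {0, 1}" using sturmian_range[OF assms] .
  let ?u = "morph_inf (phi_b_pow k) w"
  have occ: "{i. fac ?u i k = replicate k 0} = range (block_start (phi_b_pow k) w)"
    using occurrences_zeros_phi_b_pow range_w by simp
  then have "fac ?u 0 k = replicate k 0"
    using block_start_0 by (metis (mono_tags) mem_Collect_eq rangeI)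
  moreover have "bispecial (replicate k 0) ?u"
    using bispecial_zeros_phi_b_pow[OF range_w] .
  moreover have "derived ?u (replicate k 0) = phi_b_pow k \<circ> w"
    using derived_morph_inf[OF Nil_notin_range_phi_b_pow] occ by (simp add: fun_eq_iff)
  moreover have "inj_on (phi_b_pow k) (range w)"
    unfolding range_w by (simp add: phi_b_pow_def)
  \<comment> \<open>part (2) only needs w to be binary, not that 1w is Sturmian\<close>
  ultimately show ?thesis
    using funpow_phi_a_build_one range_w
    by (simp add: funpow_phi_b equal_upto_perm_comp case_nat_eq_build)
qed

end
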